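(* Let $(V,g)$ be a Euclidean vector space and $\mathfrak{g}\subseteq\mathfrak{so}(V)$ a Lie subalgebra. Suppose there exists $T\in\Lambda^3V$ which is $\mathfrak{g}$-invariant, non-degenerate (i.e. $X\lrcorner T=0$ implies $X=0$) and satisfies $X\lrcorner T\in\mathfrak{g}^{\perp}$ for all $X\in V$. Then $\mathrm{Ric}(R)=0$ for every $R\in\mathcal{K}(\mathfrak{g},V)$.
   Context: $\Lambda^2V$ is identified with $\mathfrak{so}(V)$ via $F\mapsto g(F\cdot,\cdot)$; $\mathfrak{g}^\perp$ is the orthogonal complement of $\mathfrak{g}$ in $\Lambda^2V$. $\mathcal{K}(\mathfrak{g},V)$ is the space of algebraic curvature tensors with values in $\mathfrak{g}$: $R\in\Lambda^2V\otimes\Lambda^2V$ with $R(X,Y)\in\mathfrak{g}$ for all $X,Y$ and satisfying the first Bianchi identity $\sum_i e_i\wedge R(e_i,X)=0$ for all $X$ (equivalently, $R$ is symmetric in the two pairs and its total alternation in $\Lambda^4V$ vanishes). The Ricci contraction is $\mathrm{Ric}(R)(X,Y)=\sum_iR(X,e_i,Y,e_i)$ for an orthonormal basis $\{e_i\}$. *)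

theory Defs
  imports "HOL-Analysis.Analysis"
begin

text \<open>Lambda^2 V is identified with so(V) via F maps to g(F.,.).\<close>

definition so_elem :: "('a::euclidean_space \<Rightarrow> 'a) \<Rightarrow> bool" where
  "so_elem F \<longleftrightarrow> linear F \<and> (\<forall>x y. F x \<bullet> y = - (x \<bullet> F y))"

definition lie_subalgebra :: "('a::euclidean_space \<Rightarrow> 'a) set \<Rightarrow> bool" where
  "lie_subalgebra G \<longleftrightarrow>
     (\<forall>F\<in>G. so_elem F) \<and> (\<lambda>x. 0) \<in> G \<and>
     (\<forall>F\<in>G. \<forall>H\<in>G. (\<lambda>x. F x + H x) \<in> G) \<and>
     (\<forall>c::real. \<forall>F\<in>G. (\<lambda>x. c *\<^sub>R F x) \<in> G) \<and>
     (\<forall>F\<in>G. \<forall>H\<in>G. (\<lambda>x. F (H x) - H (F x)) \<in> G)"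

text \<open>Inner product on Lambda^2 V = so(V) (up to a positive constant, irrelevant for
orthogonality): sum over the orthonormal basis.\<close>
definition so_inner :: "('a::euclidean_space \<Rightarrow> 'a) \<Rightarrow> ('a \<Rightarrow> 'a) \<Rightarrow> real" where
  "so_inner F H = (\<Sum>i\<in>Basis. \<Sum>j\<in>Basis. (F i \<bullet> j) * (H i \<bullet> j))"

definition so_perp :: "('a::euclidean_space \<Rightarrow> 'a) set \<Rightarrow> ('a \<Rightarrow> 'a) set" where
  "so_perp G = {F. so_elem F \<and> (\<forall>H\<in>G. so_inner F H = 0)}"

definition three_form :: "('a::euclidean_space \<Rightarrow> 'a \<Rightarrow> 'a \<Rightarrow> real) \<Rightarrow> bool" where
  "three_form T \<longleftrightarrow>
     (\<forall>y z. linear (\<lambda>x. T x y z)) \<and> (\<forall>x z. linear (\<lambda>y. T x y z)) \<and>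
     (\<forall>x y. linear (\<lambda>z. T x y z)) \<and>
     (\<forall>x y z. T y x z = - T x y z) \<and> (\<forall>x y z. T x z y = - T x y z)"

text \<open>The endomorphism in so(V) corresponding to a 2-form omega, i.e. g(F Y, Z) = omega(Y,Z).\<close>
definition form_to_endo :: "('a::euclidean_space \<Rightarrow> 'a \<Rightarrow> real) \<Rightarrow> 'a \<Rightarrow> 'a" where
  "form_to_endo \<omega> = (\<lambda>y. \<Sum>b\<in>Basis. \<omega> y b *\<^sub>R b)"

definition interior3 :: "'a::euclidean_space \<Rightarrow> ('a \<Rightarrow> 'a \<Rightarrow> 'a \<Rightarrow> real) \<Rightarrow> 'a \<Rightarrow> 'a" where
  "interior3 X T = form_to_endo (\<lambda>y z. T X y z)"

definition invariant3 :: "('a::euclidean_space \<Rightarrow> 'a) set \<Rightarrow> ('a \<Rightarrow> 'a \<Rightarrow> 'a \<Rightarrow> real) \<Rightarrow> bool" where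
  "invariant3 G T \<longleftrightarrow>
     (\<forall>A\<in>G. \<forall>x y z. T (A x) y z + T x (A y) z + T x y (A z) = 0)"

definition nondegenerate3 :: "('a::euclidean_space \<Rightarrow> 'a \<Rightarrow> 'a \<Rightarrow> real) \<Rightarrow> bool" where
  "nondegenerate3 T \<longleftrightarrow> (\<forall>X. (\<forall>y z. T X y z = 0) \<longrightarrow> X = 0)"

text \<open>Algebraic curvature tensors with values in G, as 4-linear forms
R(X,Y,Z,W) = g(R(X,Y)Z,W).\<close>
definition curv_tensors ::
  "('a::euclidean_space \<Rightarrow> 'a) set \<Rightarrow> ('a \<Rightarrow> 'a \<Rightarrow> 'a \<Rightarrow> 'a \<Rightarrow> real) set" where
  "curv_tensors G = {R.
     (\<forall>y z w. linear (\<lambda>x. R x y z w)) \<and> (\<forall>x z w. linear (\<lambda>y. R x y z w)) \<and>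
     (\<forall>x y w. linear (\<lambda>z. R x y z w)) \<and> (\<forall>x y z. linear (\<lambda>w. R x y z w)) \<and>
     (\<forall>x y z w. R y x z w = - R x y z w) \<and>
     (\<forall>x y z w. R x y w z = - R x y z w) \<and>
     (\<forall>x y z w. R z w x y = R x y z w) \<and>
     (\<forall>x y z w. R x y z w + R y z x w + R z x y w = 0) \<and>
     (\<forall>x y. form_to_endo (R x y) \<in> G)}"

definition Ric :: "('a::euclidean_space \<Rightarrow> 'a \<Rightarrow> 'a \<Rightarrow> 'a \<Rightarrow> real) \<Rightarrow> 'a \<Rightarrow> 'a \<Rightarrow> real" where
  "Ric R X Y = (\<Sum>i\<in>Basis. R X i Y i)"

end

theory Submission
  imports Defs
begin

(* Fix R in K(g,V) and write R_Y k for the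
   endomorphism R(Y,k) in g.  All tensors are handled in an orthonormal basis.
   (1) Since X \<lrcorner> T is orthogonal to g, it is orthogonal to every R(Y,Z);
       by pair symmetry  sum_ij T(X,i,j) R(i,j,Y,Z) = 0.
   (2) The first Bianchi identity turns this into the vanishing of the mixed
       contraction  sum_ij T(X,i,j) R(Y,i,Z,j)  (it equals half of (1)).
   (3) g-invariance of T applied to R_Y k and summed over k: two of the three
       terms are mixed contractions, the third is  -sum_b Ric(Y,b) T(x,y,b).
       Hence the vector  v = sum_b Ric(Y,b) b  satisfies  v \<lrcorner> T = 0.
   (4) Non-degeneracy gives v = 0, so Ric(Y,.) vanishes on the basis and,
       being linear, vanishes identically. *)

lemma linear_form_to_endo:
  assumes "linear (f :: 'a::euclidean_space \<Rightarrow> real)"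
  shows "f (form_to_endo \<omega> x) = (\<Sum>b\<in>Basis. \<omega> x b * f b)"
  using assms unfolding form_to_endo_def by (simp add: linear_sum linear_scale)

lemma inner_form_to_endo:
  assumes "(b::'a::euclidean_space) \<in> Basis"
  shows "form_to_endo \<omega> x \<bullet> b = \<omega> x b"
  using assms by (simp add: form_to_endo_def inner_sum_left inner_Basis if_distrib cong: if_cong)

lemma so_inner_form_to_endo:
  "so_inner (form_to_endo \<omega>) (form_to_endo \<eta>) =
     (\<Sum>i\<in>Basis. \<Sum>j\<in>Basis. \<omega> i j * \<eta> i j)"
  unfolding so_inner_def by (simp add: inner_form_to_endo)

lemma linear_zero_on_Basis:
  assumes "linear (f :: 'a::euclidean_space \<Rightarrow> real)" and "\<And>b. b \<in> Basis \<Longrightarrow> f b = 0"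
  shows "f x = 0"
proof -
  have "f x = f (\<Sum>b\<in>Basis. (x \<bullet> b) *\<^sub>R b)" by (simp add: euclidean_representation)
  also have "\<dots> = (\<Sum>b\<in>Basis. (x \<bullet> b) * f b)" using assms(1) by (simp add: linear_sum linear_scale)
  finally show ?thesis using assms(2) by simp
qed

lemma three_formD:
  assumes "three_form T"
  shows three_form_linear1: "linear (\<lambda>x. T x y z)"
    and three_form_linear2: "linear (\<lambda>y. T x y z)"
    and three_form_linear3: "linear (\<lambda>z. T x y z)"
    and three_form_skew12: "T y x z = - T x y z"
    and three_form_skew23: "T x z y = - T x y z"
  using assms unfolding three_form_def by blast+

lemma three_form_cyclic:
  assumes "three_form T"
  shows "T x y z = T y z x"
  using three_form_skew12[OF assms, of y x z] three_form_skew23[OF assms, of y x z] by simp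

lemma curv_tensorsD:
  assumes "R \<in> curv_tensors G"
  shows curv_linear3: "linear (\<lambda>z. R x y z w)"
    and curv_skew12: "R y x z w = - R x y z w"
    and curv_skew34: "R x y w z = - R x y z w"
    and curv_pair_sym: "R z w x y = R x y z w"
    and curv_bianchi: "R x y z w + R y z x w + R z x y w = 0"
    and curv_values: "form_to_endo (R x y) \<in> G"
  using assms unfolding curv_tensors_def mem_Collect_eq by (elim conjE; metis)+

lemma perp_contraction:
  assumes "interior3 X T \<in> so_perp G" and "form_to_endo \<eta> \<in> G"
  shows "(\<Sum>i\<in>Basis. \<Sum>j\<in>Basis. T X i j * \<eta> i j) = 0"
proof -
  have "so_inner (form_to_endo (T X)) (form_to_endo \<eta>) = 0"
    using assms unfolding so_perp_def interior3_def by auto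
  thus ?thesis by (simp add: so_inner_form_to_endo)
qed

lemma bianchi_mixed_contraction:
  fixes \<omega> :: "'a::euclidean_space \<Rightarrow> 'a \<Rightarrow> real" and R :: "'a \<Rightarrow> 'a \<Rightarrow> 'a \<Rightarrow> 'a \<Rightarrow> real"
  assumes \<omega>_skew: "\<And>i j. \<omega> j i = - \<omega> i j"
    and skew12: "\<And>x y z w. R y x z w = - R x y z w"
    and skew34: "\<And>x y z w. R x y w z = - R x y z w"
    and bianchi: "\<And>x y z w. R x y z w + R y z x w + R z x y w = 0"
  shows "(\<Sum>i\<in>Basis. \<Sum>j\<in>Basis. \<omega> i j * R Y i Z j) =
         (\<Sum>i\<in>Basis. \<Sum>j\<in>Basis. \<omega> i j * R i j Y Z) / 2"
proof -
  define S0 where "S0 = (\<Sum>i\<in>Basis. \<Sum>j\<in>Basis. \<omega> i j * R i j Y Z)"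
  define S1 where "S1 = (\<Sum>i\<in>Basis. \<Sum>j\<in>Basis. \<omega> i j * R j Y i Z)"
  define S2 where "S2 = (\<Sum>i\<in>Basis. \<Sum>j\<in>Basis. \<omega> i j * R Y i j Z)"
  have "S0 + S1 + S2 =
      (\<Sum>i\<in>Basis. \<Sum>j\<in>Basis. \<omega> i j * (R i j Y Z + R j Y i Z + R Y i j Z))"
    unfolding S0_def S1_def S2_def by (simp add: sum.distrib algebra_simps)
  also have "\<dots> = 0" by (simp add: bianchi)
  finally have cyclic_sum: "S0 + S1 + S2 = 0" .
  text \<open>Swapping the summation indices identifies S1 with S2.\<close>
  have "S1 = (\<Sum>j\<in>Basis. \<Sum>i\<in>Basis. \<omega> i j * R j Y i Z)"
    unfolding S1_def by (rule sum.swap)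
  also have "\<dots> = S2"
  proof -
    have "\<omega> i j * R j Y i Z = \<omega> j i * R Y j i Z" for i j
      using \<omega>_skew[of j i] skew12[of j Y i Z] by simp
    thus ?thesis unfolding S2_def by simp
  qed
  finally have "S1 = S2" .
  moreover have "S2 = - (\<Sum>i\<in>Basis. \<Sum>j\<in>Basis. \<omega> i j * R Y i Z j)"
  proof -
    have "\<omega> i j * R Y i j Z = - (\<omega> i j * R Y i Z j)" for i j
      using skew34[of Y i Z j] by simp
    thus ?thesis unfolding S2_def by (simp add: sum_negf)
  qed
  ultimately show ?thesis using cyclic_sum unfolding S0_def by simp
qed

lemma invariance_coordinates:
  assumes T: "three_form T" and "invariant3 G T" and "form_to_endo \<omega> \<in> G"
  shows "(\<Sum>b\<in>Basis. \<omega> x b * T b y z) + (\<Sum>b\<in>Basis. \<omega> y b * T x b z)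
         + (\<Sum>b\<in>Basis. \<omega> z b * T x y b) = 0"
proof -
  have "T (form_to_endo \<omega> x) y z + T x (form_to_endo \<omega> y) z + T x y (form_to_endo \<omega> z) = 0"
    using assms(2,3) unfolding invariant3_def by blast
  thus ?thesis
    by (simp add: linear_form_to_endo[OF three_form_linear1[OF T, of y z]]
        linear_form_to_endo[OF three_form_linear2[OF T, of x z]]
        linear_form_to_endo[OF three_form_linear3[OF T, of x y]])
qed

lemma invariance_ricci_contraction:
  assumes T: "three_form T" and "invariant3 G T" and R: "R \<in> curv_tensors G"
    and mixed: "\<And>X Z. (\<Sum>i\<in>Basis. \<Sum>j\<in>Basis. T X i j * R Y i Z j) = 0"
  shows "(\<Sum>b\<in>Basis. Ric R Y b * T x y b) = 0"
proof -
  define A where "A = (\<Sum>k\<in>Basis. \<Sum>b\<in>Basis. R Y k x b * T b y k)"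
  define B where "B = (\<Sum>k\<in>Basis. \<Sum>b\<in>Basis. R Y k y b * T x b k)"
  define C where "C = (\<Sum>k\<in>Basis. \<Sum>b\<in>Basis. R Y k k b * T x y b)"
  have "A + B + C = (\<Sum>k\<in>Basis. (\<Sum>b\<in>Basis. R Y k x b * T b y k)
      + (\<Sum>b\<in>Basis. R Y k y b * T x b k) + (\<Sum>b\<in>Basis. R Y k k b * T x y b))"
    unfolding A_def B_def C_def by (simp add: sum.distrib)
  also have "\<dots> = 0"
    using invariance_coordinates[OF T assms(2) curv_values[OF R]] by simp
  finally have "A + B + C = 0" .
  moreover have "A = 0"
  proof -
    have cyc: "R Y k x b * T b y k = T y k b * R Y k x b" for k b
      using three_form_cyclic[OF T, of b y k] by simp
    show ?thesis using mixed[of y x] unfolding A_def by (simp only: cyc)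
  qed
  moreover have "B = 0"
  proof -
    have skew: "R Y k y b * T x b k = - (T x k b * R Y k y b)" for k b
      using three_form_skew23[OF T, of x k b] by simp
    show ?thesis using mixed[of x y] unfolding B_def by (simp only: skew sum_negf)
  qed
  moreover have "C = - (\<Sum>b\<in>Basis. Ric R Y b * T x y b)"
  proof -
    have "C = (\<Sum>b\<in>Basis. \<Sum>k\<in>Basis. R Y k k b * T x y b)"
      unfolding C_def by (rule sum.swap)
    also have "\<dots> = (\<Sum>b\<in>Basis. \<Sum>k\<in>Basis. - (R Y k b k * T x y b))"
      using curv_skew34[OF R, of Y k b k for k b] by simp
    finally show ?thesis by (simp add: Ric_def sum_distrib_right sum_negf)
  qed
  ultimately show ?thesis by simp
qed

lemma nondegenerate_coefficients:
  assumes T: "three_form T" and "nondegenerate3 T"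
    and vanish: "\<And>x y. (\<Sum>b\<in>Basis. c b * T x y b) = 0" and b: "b \<in> Basis"
  shows "c b = 0"
proof -
  define v :: 'a where "v = (\<Sum>b\<in>Basis. c b *\<^sub>R b)"
  have "T v x y = 0" for x y
  proof -
    have "T v x y = T x y v" by (rule three_form_cyclic[OF T])
    also have "\<dots> = (\<Sum>b\<in>Basis. c b * T x y b)"
      unfolding v_def using three_form_linear3[OF T, of x y] by (simp add: linear_sum linear_scale)
    finally show ?thesis using vanish by simp
  qed
  hence "v = 0" using assms(2) unfolding nondegenerate3_def by blast
  moreover have "v \<bullet> b = c b"
    unfolding v_def using b by (simp add: inner_sum_left inner_Basis if_distrib cong: if_cong)
  ultimately show ?thesis by simp
qed

lemma Ric_linear:
  assumes "R \<in> curv_tensors G"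
  shows "linear (\<lambda>W. Ric R X W)"
  unfolding Ric_def by (intro linear_compose_sum) (simp add: curv_linear3[OF assms])

theorem proposition2p4:
  fixes G :: "('a::euclidean_space \<Rightarrow> 'a) set"
    and T :: "'a \<Rightarrow> 'a \<Rightarrow> 'a \<Rightarrow> real"
  assumes "lie_subalgebra G"
    and "three_form T"
    and "invariant3 G T"
    and "nondegenerate3 T"
    and "\<forall>X. interior3 X T \<in> so_perp G"
  shows "\<forall>R\<in>curv_tensors G. \<forall>X Y. Ric R X Y = 0"
proof (intro ballI allI)
  fix R X Y assume R: "R \<in> curv_tensors G"
  have first_pair: "(\<Sum>i\<in>Basis. \<Sum>j\<in>Basis. T X' i j * R i j Y' Z) = 0" for X' Y' Z
    using perp_contraction[OF spec[OF assms(5)] curv_values[OF R]]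
    by (simp add: curv_pair_sym[OF R, of _ _ Y' Z])
  have mixed: "(\<Sum>i\<in>Basis. \<Sum>j\<in>Basis. T X' i j * R X i Z j) = 0" for X' Z
    using bianchi_mixed_contraction[of "T X'" R X Z, OF three_form_skew23[OF assms(2)]
        curv_skew12[OF R] curv_skew34[OF R] curv_bianchi[OF R]] first_pair[of X' X Z]
    by simp
  have "Ric R X b = 0" if "b \<in> Basis" for b
    using nondegenerate_coefficients[OF assms(2,4) _ that]
      invariance_ricci_contraction[OF assms(2,3) R mixed] by blast
  then show "Ric R X Y = 0" by (rule linear_zero_on_Basis[OF Ric_linear[OF R]])
qed

end
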